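(* Let $X$ be a real linear space and $\phi\colon X\times X\to\mathbb{R}$ a biadditive functional such that $\phi(z_0,z_0)<0$ for some $z_0\in X$. Then there is no function $f\colon X\to\mathbb{R}$ satisfying $f(x+y)=f(x)f(y)-\phi(x,y)$ for all $x,y\in X$.
   Context: A map $\phi\colon X\times X\to\mathbb{R}$ is biadditive if it is additive in each variable separately (no homogeneity assumed). *)

theory Defs
  imports Complex_Main
begin

definition biadditive :: "('a::ab_group_add \<Rightarrow> 'a \<Rightarrow> real) \<Rightarrow> bool" where
  "biadditive \<phi> \<longleftrightarrow>
     (\<forall>x y z. \<phi> (x + y) z = \<phi> x z + \<phi> y z) \<and>
     (\<forall>x y z. \<phi> x (y + z) = \<phi> x y + \<phi> x z)"

end

theory Submission
  imports Defs
begin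

text \<open>Expanding \<open>f ((x + y) + z) = f (x + (y + z))\<close> with the functional equation and
  biadditivity gives \<open>\<phi> x y (f z - 1) = \<phi> y z (f x - 1)\<close>. Taking \<open>x = y = z\<^sub>0\<close> and
  \<open>z = 2 z\<^sub>0\<close> and comparing with the equation at \<open>(z\<^sub>0, z\<^sub>0)\<close> shows that
  \<open>(f z\<^sub>0 - 1)\<^sup>2 = \<phi> z\<^sub>0 z\<^sub>0\<close> whenever \<open>\<phi> z\<^sub>0 z\<^sub>0 \<noteq> 0\<close>, which is impossible for a negative value.\<close>

lemma biadditive_mult_sub_one_symmetric:
  fixes \<phi> :: "'a::ab_group_add \<Rightarrow> 'a \<Rightarrow> real"
  assumes "biadditive \<phi>"
    and f_eq: "\<And>x y. f (x + y) = f x * f y - \<phi> x y"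
  shows "\<phi> x y * (f z - 1) = \<phi> y z * (f x - 1)"
proof -
  have "f ((x + y) + z) = f (x + (y + z))"
    by (simp add: add.assoc)
  then have "(f x * f y - \<phi> x y) * f z - (\<phi> x z + \<phi> y z)
      = f x * (f y * f z - \<phi> y z) - (\<phi> x y + \<phi> x z)"
    using assms(1) by (simp add: f_eq biadditive_def)
  then show ?thesis
    by (simp add: algebra_simps)
qed

lemma biadditive_sub_one_square:
  fixes \<phi> :: "'a::ab_group_add \<Rightarrow> 'a \<Rightarrow> real"
  assumes "biadditive \<phi>"
    and f_eq: "\<And>x y. f (x + y) = f x * f y - \<phi> x y"
    and nonzero: "\<phi> z z \<noteq> 0"
  shows "(f z - 1)\<^sup>2 = \<phi> z z"
proof -
  have "\<phi> z z * (f (z + z) - 1) = \<phi> z (z + z) * (f z - 1)"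
    using biadditive_mult_sub_one_symmetric[OF assms(1,2)] .
  also have "\<phi> z (z + z) = \<phi> z z * 2"
    using assms(1) by (simp add: biadditive_def)
  finally have "f (z + z) - 1 = 2 * (f z - 1)"
    using nonzero by simp
  then show ?thesis
    by (simp add: f_eq power2_eq_square algebra_simps)
qed

theorem corollary1:
  fixes \<phi> :: "'a::real_vector \<Rightarrow> 'a \<Rightarrow> real" and z0 :: 'a
  assumes "biadditive \<phi>"
    and "\<phi> z0 z0 < 0"
  shows "\<not> (\<exists>f :: 'a \<Rightarrow> real. \<forall>x y. f (x + y) = f x * f y - \<phi> x y)"
proof
  assume "\<exists>f :: 'a \<Rightarrow> real. \<forall>x y. f (x + y) = f x * f y - \<phi> x y"
  then obtain f :: "'a \<Rightarrow> real" where "\<And>x y. f (x + y) = f x * f y - \<phi> x y"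
    by blast
  then have "(f z0 - 1)\<^sup>2 = \<phi> z0 z0"
    using biadditive_sub_one_square assms by force
  with assms(2) show False
    by (metis zero_le_power2 not_le)
qed

end
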